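(* Let $\mu$ be a density on $[q]^n$ with $H_\infty(\mu)\ge(n-t)\log q$. Then there exists a partition $[q]^n=\left(\bigcup_{i\in[N]}S_i\right)\cup S_{error}$ such that for each $i\in[N]$, the density $\mu$ conditioned on $S_i$ is a $10t$-CBD distribution, and $\mu(S_{error})\le q^{-t}$.
   Context: Logarithms base 2. A density on $[q]^n$ is $\mu\ge0$ with uniform average $1$; $X\sim\mu$ means $\Pr[X=x]=\mu(x)q^{-n}$; $H_\infty(\mu)=\min_x\log(q^n/\mu(x))$; for a random variable $Z$, $H_\infty(Z)=\min_z\log(1/\Pr[Z=z])$. $\mu(S)=\Pr_{X\sim\mu}[X\in S]$, and $\mu$ conditioned on $S$ is the distribution of $X\sim\mu$ conditioned on $X\in S$. $X_I$ is the projection onto coordinates $I\subseteq[n]$. A random variable $X$ on $[q]^n$ is $d$-CBD if there is $I\subseteq[n]$, $|I|\le d$, with $X_I$ constant and $H_\infty(X_J)\ge0.8\log q\cdot|J|$ for every $J\subseteq[n]\setminus I$. *)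

theory Defs
  imports Complex_Main "HOL-Library.FuncSet"
begin

definition cube :: "nat \<Rightarrow> nat \<Rightarrow> (nat \<Rightarrow> nat) set" where
  "cube q n = PiE {..<n} (\<lambda>_. {..<q})"

text \<open>A density: nonnegative with uniform average 1.\<close>
definition is_density :: "nat \<Rightarrow> nat \<Rightarrow> ((nat \<Rightarrow> nat) \<Rightarrow> real) \<Rightarrow> bool" where
  "is_density q n \<mu> \<longleftrightarrow> (\<forall>x\<in>cube q n. 0 \<le> \<mu> x) \<and> (\<Sum>x\<in>cube q n. \<mu> x) = real q ^ n"

text \<open>Min-entropy of a density: min over x of log(q^n / mu(x)); points with mu(x)=0 contribute +infinity,
  so the minimum is taken over the support.\<close>
definition dens_Hinf :: "nat \<Rightarrow> nat \<Rightarrow> ((nat \<Rightarrow> nat) \<Rightarrow> real) \<Rightarrow> real" where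
  "dens_Hinf q n \<mu> = Min {log 2 (real q ^ n / \<mu> x) | x. x \<in> cube q n \<and> 0 < \<mu> x}"

text \<open>mu(S) = Pr_{X ~ mu}[X in S], where Pr[X = x] = mu(x) q^{-n}.\<close>
definition dens_measure :: "nat \<Rightarrow> nat \<Rightarrow> ((nat \<Rightarrow> nat) \<Rightarrow> real) \<Rightarrow> (nat \<Rightarrow> nat) set \<Rightarrow> real" where
  "dens_measure q n \<mu> S = (\<Sum>x\<in>cube q n \<inter> S. \<mu> x) / real q ^ n"

text \<open>Probability mass function of mu conditioned on S (a random variable on [q]^n is
  represented by its probability mass function on cube q n).\<close>
definition cond_dist :: "nat \<Rightarrow> nat \<Rightarrow> ((nat \<Rightarrow> nat) \<Rightarrow> real) \<Rightarrow> (nat \<Rightarrow> nat) set \<Rightarrow> (nat \<Rightarrow> nat) \<Rightarrow> real" where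
  "cond_dist q n \<mu> S = (\<lambda>x. if x \<in> cube q n \<inter> S then (\<mu> x / real q ^ n) / dens_measure q n \<mu> S else 0)"

definition proj_prob :: "nat \<Rightarrow> nat \<Rightarrow> ((nat \<Rightarrow> nat) \<Rightarrow> real) \<Rightarrow> nat set \<Rightarrow> (nat \<Rightarrow> nat) \<Rightarrow> real" where
  "proj_prob q n P J z = (\<Sum>x\<in>{x\<in>cube q n. restrict x J = z}. P x)"

definition proj_Hinf :: "nat \<Rightarrow> nat \<Rightarrow> ((nat \<Rightarrow> nat) \<Rightarrow> real) \<Rightarrow> nat set \<Rightarrow> real" where
  "proj_Hinf q n P J = Min {log 2 (1 / proj_prob q n P J z) | z. z \<in> (\<lambda>x. restrict x J) ` {x\<in>cube q n. 0 < P x}}"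

definition is_CBD :: "nat \<Rightarrow> nat \<Rightarrow> real \<Rightarrow> ((nat \<Rightarrow> nat) \<Rightarrow> real) \<Rightarrow> bool" where
  "is_CBD q n d P \<longleftrightarrow> (\<exists>I\<subseteq>{..<n}. real (card I) \<le> d
      \<and> (\<exists>c. \<forall>x\<in>cube q n. 0 < P x \<longrightarrow> restrict x I = c)
      \<and> (\<forall>J\<subseteq>{..<n} - I. proj_Hinf q n P J \<ge> 0.8 * log 2 (real q) * real (card J)))"

end

theory Submission
  imports Defs
begin

text \<open>Greedy peeling. While the remaining set R carries mass more than q^-t, choose a set I of
  coordinates of maximal size for which some fiber {x \<in> R. x_I = \<alpha>} keeps at least a
  q^(-0.8|I|) fraction of the mass of R, and split this fiber off. Maximality of I means that
  fixing any further coordinates J costs a factor q^(-0.8|J|), which is the min-entropy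
  condition of a CBD distribution. Since H_inf(\<mu>) \<ge> (n - t) log q bounds \<mu> pointwise by q^t, a fiber
  over I has mass at most q^(t - |I|); comparing with q^(-0.8|I|) q^-t gives |I| \<le> 10t.\<close>

lemma finite_cube [simp]: "finite (cube q n)"
  unfolding cube_def by (simp add: finite_PiE)

definition fiber :: "(nat \<Rightarrow> nat) set \<Rightarrow> nat set \<Rightarrow> (nat \<Rightarrow> nat) \<Rightarrow> (nat \<Rightarrow> nat) set" where
  "fiber R I \<alpha> = {x\<in>R. restrict x I = \<alpha>}"

lemma fiber_subset: "fiber R I \<alpha> \<subseteq> R"
  unfolding fiber_def by auto

lemma fiber_empty_coords: "fiber R {} (restrict y {}) = R"
  unfolding fiber_def by auto

lemma fiber_fiber:
  assumes "restrict y I = \<alpha>"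
  shows "fiber (fiber R I \<alpha>) J (restrict y J) = fiber R (I \<union> J) (restrict y (I \<union> J))"
proof -
  have "restrict x (I \<union> J) = restrict y (I \<union> J) \<longleftrightarrow>
        restrict x I = restrict y I \<and> restrict x J = restrict y J" for x
    unfolding fun_eq_iff restrict_def by auto
  then show ?thesis using assms unfolding fiber_def by auto
qed

lemma card_cube_fiber_le:
  assumes "I \<subseteq> {..<n}"
  shows "card (fiber (cube q n) I \<alpha>) \<le> q ^ (n - card I)"
proof -
  let ?B = "PiE ({..<n} - I) (\<lambda>_. {..<q})"
  have "inj_on (\<lambda>x. restrict x ({..<n} - I)) (fiber (cube q n) I \<alpha>)"
  proof (rule inj_onI, rule ext)
    fix x y i
    assume x: "x \<in> fiber (cube q n) I \<alpha>" and y: "y \<in> fiber (cube q n) I \<alpha>"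
      and eq: "restrict x ({..<n} - I) = restrict y ({..<n} - I)"
    consider "i \<in> I" | "i \<in> {..<n} - I" | "i \<notin> {..<n}"
      using assms by blast
    then show "x i = y i"
    proof cases
      case 1
      have "restrict x I i = restrict y I i"
        using x y by (simp add: fiber_def)
      then show ?thesis using 1 by simp
    next
      case 2
      have "restrict x ({..<n} - I) i = restrict y ({..<n} - I) i"
        using eq by simp
      then show ?thesis using 2 by simp
    next
      case 3
      then show ?thesis
        using x y unfolding fiber_def cube_def by (auto simp: PiE_def extensional_def)
    qed
  qed
  moreover have "(\<lambda>x. restrict x ({..<n} - I)) ` fiber (cube q n) I \<alpha> \<subseteq> ?B"
    unfolding fiber_def cube_def by (auto simp: PiE_def Pi_def)
  ultimately have "card (fiber (cube q n) I \<alpha>) \<le> card ?B"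
    by (intro card_inj_on_le) (auto simp: finite_PiE)
  also have "card ?B = q ^ (n - card I)"
    using assms by (simp add: card_PiE card_Diff_subset finite_subset)
  finally show ?thesis .
qed

context
  fixes q n :: nat and \<mu> :: "(nat \<Rightarrow> nat) \<Rightarrow> real"
  assumes q_pos: "0 < q"
    and nonneg: "\<And>x. x \<in> cube q n \<Longrightarrow> 0 \<le> \<mu> x"
begin

lemma cube_volume_pos: "0 < real q ^ n"
  using q_pos by simp

lemma dens_measure_ge_point:
  "x \<in> cube q n \<Longrightarrow> x \<in> A \<Longrightarrow> \<mu> x / real q ^ n \<le> dens_measure q n \<mu> A"
  unfolding dens_measure_def using cube_volume_pos
  by (intro divide_right_mono member_le_sum) (auto intro: nonneg)

lemma dens_measure_pos_obtain:
  assumes "0 < dens_measure q n \<mu> A"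
  obtains x where "x \<in> cube q n" "x \<in> A" "0 < \<mu> x"
proof (rule ccontr)
  assume "\<not> thesis"
  then have "(\<Sum>x\<in>cube q n \<inter> A. \<mu> x) \<le> 0"
    using that by (intro sum_nonpos) (meson IntE not_less)
  then have "dens_measure q n \<mu> A \<le> 0"
    unfolding dens_measure_def using cube_volume_pos by (rule divide_nonpos_pos)
  then show False
    using assms by simp
qed

lemma dens_measure_le_cube_fiber:
  assumes bound: "\<And>x. x \<in> cube q n \<Longrightarrow> \<mu> x \<le> real q powr t"
    and I: "I \<subseteq> {..<n}"
  shows "dens_measure q n \<mu> (fiber R I \<alpha>) \<le> real q powr (t - real (card I))"
proof -
  have cI: "card I \<le> n"
    using I by (metis card_lessThan card_mono finite_lessThan)
  have "dens_measure q n \<mu> (fiber R I \<alpha>) \<le> (\<Sum>x\<in>cube q n \<inter> fiber R I \<alpha>. real q powr t) / real q ^ n"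
    unfolding dens_measure_def using cube_volume_pos
    by (intro divide_right_mono sum_mono bound) auto
  also have "\<dots> = real (card (cube q n \<inter> fiber R I \<alpha>)) * real q powr t / real q ^ n"
    by simp
  also have "\<dots> \<le> real (q ^ (n - card I)) * real q powr t / real q ^ n"
  proof -
    have "card (cube q n \<inter> fiber R I \<alpha>) \<le> card (fiber (cube q n) I \<alpha>)"
      unfolding fiber_def by (intro card_mono) auto
    also have "\<dots> \<le> q ^ (n - card I)"
      using I by (rule card_cube_fiber_le)
    finally show ?thesis
      using cube_volume_pos by (intro divide_right_mono mult_right_mono) auto
  qed
  also have "\<dots> = real q powr (t - real (card I))"
    using q_pos cI
    by (simp add: powr_realpow[symmetric] of_nat_diff powr_add[symmetric] powr_diff[symmetric])
  finally show ?thesis .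
qed

lemma proj_prob_cond_dist:
  "proj_prob q n (cond_dist q n \<mu> S) J z =
     dens_measure q n \<mu> (fiber S J z) / dens_measure q n \<mu> S"
proof -
  have "proj_prob q n (cond_dist q n \<mu> S) J z =
     (\<Sum>x\<in>{x\<in>{x\<in>cube q n. restrict x J = z}. x \<in> cube q n \<inter> S}.
        \<mu> x / real q ^ n / dens_measure q n \<mu> S)"
    unfolding proj_prob_def cond_dist_def by (subst sum.inter_filter) auto
  also have "{x\<in>{x\<in>cube q n. restrict x J = z}. x \<in> cube q n \<inter> S} = cube q n \<inter> fiber S J z"
    unfolding fiber_def by auto
  finally show ?thesis
    unfolding dens_measure_def[of _ _ _ "fiber S J z"] by (simp add: sum_divide_distrib)
qed

lemma is_CBD_cond_distI:
  assumes mS: "0 < dens_measure q n \<mu> S"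
    and I: "I \<subseteq> {..<n}" "real (card I) \<le> d"
    and const: "\<And>x. x \<in> S \<Longrightarrow> restrict x I = \<alpha>"
    and spread: "\<And>J y. J \<subseteq> {..<n} - I \<Longrightarrow> y \<in> S \<Longrightarrow>
       dens_measure q n \<mu> (fiber S J (restrict y J))
         \<le> real q powr (- 0.8 * real (card J)) * dens_measure q n \<mu> S"
  shows "is_CBD q n d (cond_dist q n \<mu> S)"
proof -
  let ?P = "cond_dist q n \<mu> S"
  have supp: "x \<in> cube q n \<and> x \<in> S \<and> 0 < \<mu> x" if "0 < ?P x" for x
    using that mS cube_volume_pos unfolding cond_dist_def
    by (auto split: if_splits simp: zero_less_divide_iff dest: nonneg)
  obtain x0 where x0: "x0 \<in> cube q n" "x0 \<in> S" "0 < \<mu> x0"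
    using mS by (rule dens_measure_pos_obtain)
  then have Px0: "0 < ?P x0"
    using mS cube_volume_pos unfolding cond_dist_def by simp
  have entropy: "0.8 * log 2 (real q) * real (card J) \<le> proj_Hinf q n ?P J"
    if J: "J \<subseteq> {..<n} - I" for J
  proof -
    let ?A = "{log 2 (1 / proj_prob q n ?P J z) | z. z \<in> (\<lambda>x. restrict x J) ` {x\<in>cube q n. 0 < ?P x}}"
    have "0.8 * log 2 (real q) * real (card J) \<le> log 2 (1 / proj_prob q n ?P J (restrict y J))"
      if y: "0 < ?P y" for y
    proof -
      let ?p = "proj_prob q n ?P J (restrict y J)"
      have yS: "y \<in> cube q n" "y \<in> S" "0 < \<mu> y"
        using supp[OF y] by auto
      have p: "?p = dens_measure q n \<mu> (fiber S J (restrict y J)) / dens_measure q n \<mu> S"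
        by (rule proj_prob_cond_dist)
      have "0 < \<mu> y / real q ^ n"
        using yS cube_volume_pos by simp
      also have "\<dots> \<le> dens_measure q n \<mu> (fiber S J (restrict y J))"
        using yS by (intro dens_measure_ge_point) (auto simp: fiber_def)
      finally have p_pos: "0 < ?p"
        using p mS by simp
      have "?p \<le> real q powr (- 0.8 * real (card J))"
        using p spread[OF J yS(2)] mS by (simp add: divide_le_eq)
      then have "real q powr (0.8 * real (card J)) \<le> 1 / ?p"
        using p_pos q_pos by (simp add: powr_minus field_simps)
      then have "log 2 (real q powr (0.8 * real (card J))) \<le> log 2 (1 / ?p)"
        using p_pos q_pos by (subst log_le_cancel_iff) auto
      then show ?thesis
        using q_pos by (simp add: log_powr mult_ac)
    qed
    moreover have "?A \<noteq> {}"
      using x0 Px0 by auto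
    ultimately show ?thesis
      unfolding proj_Hinf_def by (subst Min_ge_iff) auto
  qed
  show ?thesis
    unfolding is_CBD_def
  proof (intro exI[of _ I] conjI)
    show "\<exists>c. \<forall>x\<in>cube q n. 0 < ?P x \<longrightarrow> restrict x I = c"
      using supp const by blast
    show "\<forall>J\<subseteq>{..<n} - I. 0.8 * log 2 (real q) * real (card J) \<le> proj_Hinf q n ?P J"
      using entropy by blast
  qed (use I in auto)
qed

definition heavy_fiber :: "(nat \<Rightarrow> nat) set \<Rightarrow> nat set \<Rightarrow> (nat \<Rightarrow> nat) \<Rightarrow> bool" where
  "heavy_fiber R I \<alpha> \<longleftrightarrow>
     real q powr (- 0.8 * real (card I)) * dens_measure q n \<mu> R \<le> dens_measure q n \<mu> (fiber R I \<alpha>)"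

lemma heavy_fiber_empty_coords: "heavy_fiber R {} (restrict y {})"
  unfolding heavy_fiber_def using q_pos by (simp add: fiber_empty_coords)

lemma is_CBD_maximal_heavy_fiber:
  assumes mR: "0 < dens_measure q n \<mu> R"
    and I: "I \<subseteq> {..<n}" "real (card I) \<le> d"
    and heavy: "heavy_fiber R I \<alpha>"
    and maximal: "\<And>K \<beta>. K \<subseteq> {..<n} \<Longrightarrow> heavy_fiber R K \<beta> \<Longrightarrow> card K \<le> card I"
  shows "is_CBD q n d (cond_dist q n \<mu> (fiber R I \<alpha>))"
proof -
  let ?m = "dens_measure q n \<mu>" and ?S = "fiber R I \<alpha>"
  have "0 < real q powr (- 0.8 * real (card I)) * ?m R"
    using q_pos mR by simp
  then have mS: "0 < ?m ?S"
    using heavy unfolding heavy_fiber_def by linarith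
  show ?thesis
  proof (rule is_CBD_cond_distI[OF mS I])
    show "restrict x I = \<alpha>" if "x \<in> ?S" for x
      using that unfolding fiber_def by auto
    fix J y assume J: "J \<subseteq> {..<n} - I" and y: "y \<in> ?S"
    show "?m (fiber ?S J (restrict y J)) \<le> real q powr (- 0.8 * real (card J)) * ?m ?S"
    proof (cases "J = {}")
      case True
      then show ?thesis using q_pos by (simp add: fiber_empty_coords)
    next
      case False
      have "finite I" "finite J"
        using I J by (auto intro: finite_subset[of _ "{..<n}"])
      moreover have "I \<inter> J = {}"
        using J by auto
      ultimately have card_IJ: "card (I \<union> J) = card I + card J" "0 < card J"
        using False by (auto simp: card_Un_disjoint)
      have "\<not> heavy_fiber R (I \<union> J) (restrict y (I \<union> J))"
      proof
        assume "heavy_fiber R (I \<union> J) (restrict y (I \<union> J))"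
        then have "card (I \<union> J) \<le> card I"
          using I J by (intro maximal) auto
        then show False
          using card_IJ by simp
      qed
      moreover have "restrict y I = \<alpha>"
        using y by (simp add: fiber_def)
      ultimately have "?m (fiber ?S J (restrict y J))
          < real q powr (- 0.8 * real (card (I \<union> J))) * ?m R"
        by (simp add: heavy_fiber_def fiber_fiber not_le)
      also have "\<dots> = real q powr (- 0.8 * real (card J)) * (real q powr (- 0.8 * real (card I)) * ?m R)"
      proof -
        have "- 0.8 * real (card (I \<union> J)) = - 0.8 * real (card J) + - 0.8 * real (card I)"
          using card_IJ by (simp add: field_simps)
        then show ?thesis
          by (simp only: powr_add mult.assoc)
      qed
      also have "\<dots> \<le> real q powr (- 0.8 * real (card J)) * ?m ?S"
        using heavy unfolding heavy_fiber_def by (intro mult_left_mono) auto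
      finally show ?thesis by simp
    qed
  qed
qed

lemma card_heavy_fiber_le:
  assumes q_gt1: "1 < q"
    and bound: "\<And>x. x \<in> cube q n \<Longrightarrow> \<mu> x \<le> real q powr t"
    and I: "I \<subseteq> {..<n}"
    and mR: "real q powr (- t) < dens_measure q n \<mu> R"
    and heavy: "heavy_fiber R I \<alpha>"
  shows "real (card I) \<le> 10 * t"
proof -
  have "real q powr (- 0.8 * real (card I) - t) = real q powr (- 0.8 * real (card I)) * real q powr (- t)"
    by (simp add: powr_add[symmetric])
  also have "\<dots> < real q powr (- 0.8 * real (card I)) * dens_measure q n \<mu> R"
    using mR q_pos by (intro mult_strict_left_mono) auto
  also have "\<dots> \<le> real q powr (t - real (card I))"
    using heavy dens_measure_le_cube_fiber[OF bound I] unfolding heavy_fiber_def by (rule order_trans)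
  finally show ?thesis
    using q_gt1 by simp
qed

lemma exists_CBD_piece:
  assumes q_gt1: "1 < q"
    and bound: "\<And>x. x \<in> cube q n \<Longrightarrow> \<mu> x \<le> real q powr t"
    and mR: "real q powr (- t) < dens_measure q n \<mu> R"
  shows "\<exists>S\<subseteq>R. S \<noteq> {} \<and> 0 < dens_measure q n \<mu> S \<and> is_CBD q n (10 * t) (cond_dist q n \<mu> S)"
proof -
  define F where "F = {K. K \<subseteq> {..<n} \<and> (\<exists>\<beta>. heavy_fiber R K \<beta>)}"
  have "finite F"
    unfolding F_def by (rule finite_subset[of _ "Pow {..<n}"]) auto
  moreover have "{} \<in> F"
    unfolding F_def using heavy_fiber_empty_coords by blast
  ultimately have "Max (card ` F) \<in> card ` F"
    by (intro Max_in) auto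
  then obtain I where "I \<in> F" and "card I = Max (card ` F)"
    by auto
  with \<open>finite F\<close> have maximal: "\<And>K. K \<in> F \<Longrightarrow> card K \<le> card I"
    by simp
  from \<open>I \<in> F\<close> obtain \<alpha> where I: "I \<subseteq> {..<n}" and heavy: "heavy_fiber R I \<alpha>"
    unfolding F_def by auto
  have "0 < real q powr (- t)"
    using q_pos by simp
  then have mR_pos: "0 < dens_measure q n \<mu> R"
    using mR by linarith
  have cI: "real (card I) \<le> 10 * t"
    using card_heavy_fiber_le[OF q_gt1 bound I mR heavy] .
  have "0 < real q powr (- 0.8 * real (card I)) * dens_measure q n \<mu> R"
    using q_pos mR_pos by simp
  then have "0 < dens_measure q n \<mu> (fiber R I \<alpha>)"
    using heavy unfolding heavy_fiber_def by linarith
  moreover from this have "fiber R I \<alpha> \<noteq> {}"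
    by (auto simp: dens_measure_def)
  moreover have "is_CBD q n (10 * t) (cond_dist q n \<mu> (fiber R I \<alpha>))"
    by (rule is_CBD_maximal_heavy_fiber[OF mR_pos I cI heavy]) (use maximal in \<open>auto simp: F_def\<close>)
  ultimately show ?thesis
    using fiber_subset[of R I \<alpha>] by blast
qed

end

lemma greedy_partition:
  assumes "finite R"
    and step: "\<And>R. \<not> small R \<Longrightarrow> \<exists>S\<subseteq>R. S \<noteq> {} \<and> good S"
  shows "\<exists>(N::nat) S E. (\<Union>i<N. S i) \<union> E = R
           \<and> (\<forall>i<N. \<forall>j<N. i \<noteq> j \<longrightarrow> S i \<inter> S j = {})
           \<and> (\<forall>i<N. S i \<inter> E = {})
           \<and> (\<forall>i<N. good (S i))
           \<and> small E"
  using assms(1)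
proof (induction "card R" arbitrary: R rule: less_induct)
  case less
  show ?case
  proof (cases "small R")
    case True
    then show ?thesis
      by (intro exI[of _ 0] exI[of _ "\<lambda>_. {}"] exI[of _ R]) simp
  next
    case False
    then obtain S1 where S1: "S1 \<subseteq> R" "S1 \<noteq> {}" "good S1"
      using step by blast
    then have "card (R - S1) < card R"
      using less.prems by (intro psubset_card_mono) auto
    from less.hyps[OF this finite_Diff[OF less.prems]]
    obtain N :: nat and S E where U: "(\<Union>i<N. S i) \<union> E = R - S1"
      and disj: "\<forall>i<N. \<forall>j<N. i \<noteq> j \<longrightarrow> S i \<inter> S j = {}" "\<forall>i<N. S i \<inter> E = {}"
      and good: "\<forall>i<N. good (S i)" and "small E"
      by (elim exE conjE) (rule that)
    let ?S = "S(N := S1)"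
    have "(\<Union>i<Suc N. ?S i) = (\<Union>i<N. S i) \<union> S1"
      by (auto simp: lessThan_Suc)
    then have "(\<Union>i<Suc N. ?S i) \<union> E = R"
      using U S1 by auto
    moreover have "?S i \<inter> ?S j = {}" if "i < Suc N" "j < Suc N" "i \<noteq> j" for i j
      using that U disj by (auto simp: less_Suc_eq)
    moreover have "?S i \<inter> E = {}" "good (?S i)" if "i < Suc N" for i
      using that U disj good S1 by (auto simp: less_Suc_eq)
    ultimately show ?thesis
      using \<open>small E\<close> by (intro exI[of _ "Suc N"] exI[of _ ?S] exI[of _ E]) blast
  qed
qed

lemma density_le_of_dens_Hinf:
  assumes "0 < q" and "x \<in> cube q n"
    and hinf: "dens_Hinf q n \<mu> \<ge> (real n - t) * log 2 (real q)"
  shows "\<mu> x \<le> real q powr t"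
proof (cases "0 < \<mu> x")
  case False
  then show ?thesis
    using powr_ge_zero[of "real q" t] by linarith
next
  case True
  have "dens_Hinf q n \<mu> \<le> log 2 (real q ^ n / \<mu> x)"
    unfolding dens_Hinf_def by (rule Min_le) (use assms True in auto)
  with hinf have "log 2 (real q powr (real n - t)) \<le> log 2 (real q ^ n / \<mu> x)"
    using assms by (simp add: log_powr)
  then have "real q powr (real n - t) \<le> real q ^ n / \<mu> x"
    using True assms by (subst (asm) log_le_cancel_iff) auto
  then have "\<mu> x * real q powr (real n - t) \<le> real q powr t * real q powr (real n - t)"
    using True assms by (simp add: field_simps powr_add[symmetric] powr_realpow)
  then show ?thesis
    using assms by simp
qed

theorem lemma6p1:
  fixes q n :: nat and t :: real and \<mu> :: "(nat \<Rightarrow> nat) \<Rightarrow> real"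
  assumes "q \<ge> 2"
    and "is_density q n \<mu>"
    and "dens_Hinf q n \<mu> \<ge> (real n - t) * log 2 (real q)"
  shows "\<exists>(N::nat) (S :: nat \<Rightarrow> (nat \<Rightarrow> nat) set) Serr.
           (\<Union>i<N. S i) \<union> Serr = cube q n
         \<and> (\<forall>i<N. \<forall>j<N. i \<noteq> j \<longrightarrow> S i \<inter> S j = {})
         \<and> (\<forall>i<N. S i \<inter> Serr = {})
         \<and> (\<forall>i<N. 0 < dens_measure q n \<mu> (S i)
                  \<and> is_CBD q n (10 * t) (cond_dist q n \<mu> (S i)))
         \<and> dens_measure q n \<mu> Serr \<le> real q powr (- t)"
proof -
  have q: "0 < q" "1 < q"
    using assms(1) by auto
  have nonneg: "\<And>x. x \<in> cube q n \<Longrightarrow> 0 \<le> \<mu> x"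
    using assms(2) by (simp add: is_density_def)
  have bound: "\<And>x. x \<in> cube q n \<Longrightarrow> \<mu> x \<le> real q powr t"
    using density_le_of_dens_Hinf[OF q(1) _ assms(3)] .
  show ?thesis
  proof (rule greedy_partition[where small = "\<lambda>E. dens_measure q n \<mu> E \<le> real q powr (- t)"
        and good = "\<lambda>S. 0 < dens_measure q n \<mu> S \<and> is_CBD q n (10 * t) (cond_dist q n \<mu> S)"])
    fix R :: "(nat \<Rightarrow> nat) set"
    assume "\<not> dens_measure q n \<mu> R \<le> real q powr (- t)"
    then have "real q powr (- t) < dens_measure q n \<mu> R"
      by simp
    then show "\<exists>S\<subseteq>R. S \<noteq> {} \<and> 0 < dens_measure q n \<mu> S \<and> is_CBD q n (10 * t) (cond_dist q n \<mu> S)"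
      using exists_CBD_piece[of q n \<mu> t R] q nonneg bound by blast
  qed (rule finite_cube)
qed

end
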